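(* Let $P_0,P_1,P_2\in\mathbb H$ be distinct, and let $\alpha:=-1+\langle P_0,P_1\rangle+\langle P_1,P_2\rangle+\langle P_2,P_0\rangle$ and $\chi:=\langle P_0\tilde\times P_1,P_2\rangle$. Let $Q_0,Q_2\in\mathbb H$ be such that $P_0P_1Q_2$ and $P_1P_2Q_0$ are equilateral, and let $R_2$, $R_0$ be the centroids of $P_0P_1Q_2$ and $P_1P_2Q_0$ respectively; let $\varepsilon_0,\varepsilon_2\in\{-1,1\}$ be the signs with $$R_2=\frac{\sqrt{1-2\langle P_0,P_1\rangle}(P_0+P_1)+\varepsilon_2P_0\tilde\times P_1}{\sqrt3(1-\langle P_0,P_1\rangle)},\quad R_0=\frac{\sqrt{1-2\langle P_1,P_2\rangle}(P_1+P_2)+\varepsilon_0P_1\tilde\times P_2}{\sqrt3(1-\langle P_1,P_2\rangle)}.$$ Then $$\begin{aligned}&3(1-\langle P_0,P_1\rangle)(1-\langle P_1,P_2\rangle)\langle R_2,R_0\rangle=\alpha\sqrt{1-2\langle P_0,P_1\rangle}\sqrt{1-2\langle P_1,P_2\rangle}\\&\quad+\chi\Bigl(\varepsilon_0\sqrt{1-2\langle P_0,P_1\rangle}+\varepsilon_2\sqrt{1-2\langle P_1,P_2\rangle}\Bigr)-\varepsilon_2\varepsilon_0\bigl(\langle P_0,P_1\rangle\langle P_1,P_2\rangle+\langle P_0,P_2\rangle\bigr).\end{aligned}$$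
   Context: $\langle v,w\rangle=-v_1w_1+v_2w_2+v_3w_3$ on $\mathbb R^3$; $\mathbb H=\{P\in\mathbb R^3:\langle P,P\rangle=-1,\ P_1\ge1\}$; $v\tilde\times w:=J(v\times w)$ with $J=\mathrm{diag}(-1,1,1)$ and $\times$ the Euclidean cross product. A triangle $ABC$ in $\mathbb H$ is equilateral if $\langle A,B\rangle=\langle B,C\rangle=\langle C,A\rangle$; its centroid is $(A+B+C)/\sqrt{-\langle A+B+C,A+B+C\rangle}$. *)

theory Defs
  imports "HOL-Analysis.Analysis"
begin

definition mink :: "real^3 \<Rightarrow> real^3 \<Rightarrow> real" where
  "mink v w = - (v$1 * w$1) + v$2 * w$2 + v$3 * w$3"

definition hyp :: "(real^3) set" where
  "hyp = {P. mink P P = -1 \<and> P$1 \<ge> 1}"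

definition Jmat :: "real^3 \<Rightarrow> real^3" where
  "Jmat v = vector [- (v$1), v$2, v$3]"

definition lcross :: "real^3 \<Rightarrow> real^3 \<Rightarrow> real^3" where
  "lcross v w = Jmat (cross3 v w)"

definition equilateral :: "real^3 \<Rightarrow> real^3 \<Rightarrow> real^3 \<Rightarrow> bool" where
  "equilateral A B C \<longleftrightarrow> mink A B = mink B C \<and> mink B C = mink C A"

definition centroid :: "real^3 \<Rightarrow> real^3 \<Rightarrow> real^3 \<Rightarrow> real^3" where
  "centroid A B C = (1 / sqrt (- mink (A + B + C) (A + B + C))) *\<^sub>R (A + B + C)"

end

theory Submission
  imports Defs
begin

text \<open>Expand \<open>\<langle>R\<^sub>2, R\<^sub>0\<rangle>\<close> bilinearly, using the explicit forms of the centroids.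
  The mixed terms are Lorentzian triple products, all equal to \<open>\<chi>\<close> or zero, and the
  product of the two cross products is evaluated by the Lorentzian Binet--Cauchy identity
  \<open>\<langle>a \<times>\<^sup>~ b, c \<times>\<^sup>~ d\<rangle> = \<langle>a,d\<rangle>\<langle>b,c\<rangle> - \<langle>a,c\<rangle>\<langle>b,d\<rangle>\<close> together with \<open>\<langle>P\<^sub>1,P\<^sub>1\<rangle> = -1\<close>.
  Clearing the denominators is legitimate because \<open>\<langle>P,Q\<rangle> \<le> -1\<close> on the hyperboloid
  (reversed Cauchy--Schwarz inequality).\<close>

lemma mink_commute: "mink x y = mink y x"
  unfolding mink_def by (simp add: mult.commute)

lemma mink_zero_left: "mink 0 x = 0"
  unfolding mink_def by simp

lemma mink_add_left: "mink (x + y) z = mink x z + mink y z"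
  unfolding mink_def by (simp add: algebra_simps)

lemma mink_add_right: "mink z (x + y) = mink z x + mink z y"
  unfolding mink_def by (simp add: algebra_simps)

lemma mink_scaleR_left: "mink (c *\<^sub>R x) z = c * mink x z"
  unfolding mink_def by (simp add: algebra_simps)

lemma mink_scaleR_right: "mink z (c *\<^sub>R x) = c * mink z x"
  unfolding mink_def by (simp add: algebra_simps)

lemma lcross_components:
  "lcross a b $ 1 = a$3 * b$2 - a$2 * b$3"
  "lcross a b $ 2 = a$3 * b$1 - a$1 * b$3"
  "lcross a b $ 3 = a$1 * b$2 - a$2 * b$1"
  unfolding lcross_def Jmat_def by (simp_all add: vector_3 cross3_simps)

lemma lcross_refl: "lcross a a = 0"
  unfolding lcross_def by (simp add: Jmat_def vector_def vec_eq_iff)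

lemma mink_lcross_left: "mink (lcross a b) a = 0"
  unfolding mink_def lcross_components by algebra

lemma mink_lcross_right: "mink (lcross a b) b = 0"
  unfolding mink_def lcross_components by algebra

lemma mink_lcross_triple: "mink a (lcross b c) = mink (lcross a b) c"
  unfolding mink_def lcross_components by algebra

lemma mink_lcross_lcross:
  "mink (lcross a b) (lcross c d) = mink a d * mink b c - mink a c * mink b d"
  unfolding mink_def lcross_components by algebra

lemma mink_hyp_le:
  assumes "P \<in> hyp" "Q \<in> hyp"
  shows "mink P Q \<le> -1"
proof -
  define p where "p = P$2 * P$2 + P$3 * P$3"
  define q where "q = Q$2 * Q$2 + Q$3 * Q$3"
  define u where "u = P$2 * Q$2 + P$3 * Q$3"
  have P: "P$1 * P$1 = 1 + p" "P$1 \<ge> 1" and Q: "Q$1 * Q$1 = 1 + q" "Q$1 \<ge> 1"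
    using assms unfolding hyp_def mink_def p_def q_def by auto
  have "u * u \<le> p * q"
    using sum_squares_ge_zero[of "P$2 * Q$3 - P$3 * Q$2" 0]
    unfolding u_def p_def q_def by (simp add: algebra_simps power2_eq_square)
  moreover have "2 * u \<le> p + q"
    using sum_squares_ge_zero[of "P$2 - Q$2" "P$3 - Q$3"]
    unfolding u_def p_def q_def by (simp add: algebra_simps power2_eq_square)
  moreover have "(P$1 * Q$1)\<^sup>2 = (1 + p) * (1 + q)"
    using P(1) Q(1) by (simp add: power2_eq_square algebra_simps)
  ultimately have "(1 + u)\<^sup>2 \<le> (P$1 * Q$1)\<^sup>2"
    by (simp add: power2_eq_square algebra_simps)
  then have "\<bar>1 + u\<bar> \<le> P$1 * Q$1"
    using abs_le_square_iff[of "1 + u" "P$1 * Q$1"] P(2) Q(2) by simp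
  then show ?thesis
    unfolding mink_def u_def by simp
qed

lemma mink_centroid_numerators:
  assumes "mink P1 P1 = -1"
  shows "mink (s *\<^sub>R (P0 + P1) + e2 *\<^sub>R lcross P0 P1) (t *\<^sub>R (P1 + P2) + e0 *\<^sub>R lcross P1 P2) =
      (-1 + mink P0 P1 + mink P1 P2 + mink P2 P0) * s * t
      + mink (lcross P0 P1) P2 * (e0 * s + e2 * t)
      - e2 * e0 * (mink P0 P1 * mink P1 P2 + mink P0 P2)"
  by (simp add: assms mink_add_left mink_add_right mink_scaleR_left mink_scaleR_right
      mink_lcross_left mink_lcross_right mink_lcross_lcross lcross_refl mink_zero_left
      mink_lcross_triple[of P0 P1 P2] mink_lcross_triple[of P1 P1 P2]
      mink_commute[of P2 P0] mink_commute[of P2 "lcross P0 P1"] algebra_simps)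

theorem lemma3p1:
  fixes P0 P1 P2 Q0 Q2 R0 R2 :: "real^3" and \<epsilon>0 \<epsilon>2 :: real
  assumes hP: "P0 \<in> hyp" "P1 \<in> hyp" "P2 \<in> hyp"
    and dist: "P0 \<noteq> P1" "P1 \<noteq> P2" "P0 \<noteq> P2"
    and hQ: "Q0 \<in> hyp" "Q2 \<in> hyp"
    and eq: "equilateral P0 P1 Q2" "equilateral P1 P2 Q0"
    and R2: "R2 = centroid P0 P1 Q2" and R0: "R0 = centroid P1 P2 Q0"
    and eps: "\<epsilon>0 \<in> {-1, 1}" "\<epsilon>2 \<in> {-1, 1}"
    and R2f: "R2 = (1 / (sqrt 3 * (1 - mink P0 P1))) *\<^sub>R
                 (sqrt (1 - 2 * mink P0 P1) *\<^sub>R (P0 + P1) + \<epsilon>2 *\<^sub>R lcross P0 P1)"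
    and R0f: "R0 = (1 / (sqrt 3 * (1 - mink P1 P2))) *\<^sub>R
                 (sqrt (1 - 2 * mink P1 P2) *\<^sub>R (P1 + P2) + \<epsilon>0 *\<^sub>R lcross P1 P2)"
  shows "3 * (1 - mink P0 P1) * (1 - mink P1 P2) * mink R2 R0 =
      (-1 + mink P0 P1 + mink P1 P2 + mink P2 P0) * sqrt (1 - 2 * mink P0 P1) * sqrt (1 - 2 * mink P1 P2)
      + mink (lcross P0 P1) P2 * (\<epsilon>0 * sqrt (1 - 2 * mink P0 P1) + \<epsilon>2 * sqrt (1 - 2 * mink P1 P2))
      - \<epsilon>2 * \<epsilon>0 * (mink P0 P1 * mink P1 P2 + mink P0 P2)"
proof -
  define X where "X = sqrt (1 - 2 * mink P0 P1) *\<^sub>R (P0 + P1) + \<epsilon>2 *\<^sub>R lcross P0 P1"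
  define Y where "Y = sqrt (1 - 2 * mink P1 P2) *\<^sub>R (P1 + P2) + \<epsilon>0 *\<^sub>R lcross P1 P2"
  have "1 - mink P0 P1 \<noteq> 0" "1 - mink P1 P2 \<noteq> 0"
    using mink_hyp_le[OF hP(1,2)] mink_hyp_le[OF hP(2,3)] by auto
  moreover have "mink R2 R0 = mink X Y / (sqrt 3 * sqrt 3 * (1 - mink P0 P1) * (1 - mink P1 P2))"
    unfolding R2f R0f X_def[symmetric] Y_def[symmetric] mink_scaleR_left mink_scaleR_right
    by (simp add: algebra_simps)
  ultimately have "3 * (1 - mink P0 P1) * (1 - mink P1 P2) * mink R2 R0 = mink X Y"
    by simp
  moreover have "mink P1 P1 = -1"
    using hP(2) unfolding hyp_def by simp
  ultimately show ?thesis
    unfolding X_def Y_def by (simp add: mink_centroid_numerators)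
qed

end
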